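(* Assume that for every $h>0$ the mesh $\mathcal T_h$ is weakly acute. Let $\varepsilon>0$. If $v_h,w_h\in\mathbb V_h$ satisfy $v_h\le w_h$ and $v_h(z)=w_h(z)$ at some interior node $z\in\mathcal N_h$, then \[ \mathfrak F_h^\varepsilon[v_h](z)\le\mathfrak F_h^\varepsilon[w_h](z). \]
   Context: Setting: $\Omega\subset\mathbb{R}^d$ ($d\ge2$) open, bounded, convex; $\mathcal A,\mathcal B$ finite nonempty sets; $A^{\alpha,\beta}\in C^{0,1}(\bar\Omega)$ symmetric-matrix-valued with $\lambda I\le A^{\alpha,\beta}\le\Lambda I$, $0<\lambda\le\Lambda$; $M^{\alpha,\beta}(x)=(A^{\alpha,\beta}(x)-\frac\lambda2 I)^{1/2}$. $\varphi$ is a fixed radially symmetric smooth function supported in the unit ball with $\int|y|^2\varphi(y)dy=d$. $Q=\sqrt{2/\lambda}$, $\Omega_\varepsilon=\Omega\cup\{x:\operatorname{dist}(x,\partial\Omega)\le Q\varepsilon\}$. For $w\in C(\bar\Omega_\varepsilon)$, $\delta w(x,y)=w(x+y)-2w(x)+w(x-y)$ and $I_\varepsilon^{\alpha,\beta}[w](x)=\frac{1}{\varepsilon^{d+2}\det M^{\alpha,\beta}(x)}\int_{\mathbb{R}^d}\delta w(x,y)\varphi(\varepsilon^{-1}M^{\alpha,\beta}(x)^{-1}y)\,dy$. $\mathcal T_h$ is a quasi-uniform simplicial mesh of $\Omega$ of size $h$; $\mathcal N_h$ and $\mathcal N_h^\partial$ are its interior and boundary nodes; $\mathbb V_h$ is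 the space of continuous piecewise-linear functions on $\mathcal T_h$, $\mathbb V_h^0=\{v\in\mathbb V_h: v=0$ on $\partial\Omega\}$, $\{\phi_z\}_{z\in\mathcal N_h}$ the Lagrange nodal basis of $\mathbb V_h^0$. An auxiliary quasi-uniform mesh $\mathcal T_h^\varepsilon$ of $\Omega_\varepsilon$ coinciding with $\mathcal T_h$ on $\Omega$ is fixed, and functions of $\mathbb V_h$ are regarded as continuous piecewise-linear functions on $\Omega_\varepsilon$ (functions of $\mathbb V_h^0$ extended by zero). A mesh is weakly acute if all dihedral angles of its simplices are at most $\pi/2$. Discrete Laplacian: $\Delta_h w_h(z)=-\left(\int_\Omega\phi_z\right)^{-1}\int_\Omega\nabla w_h\cdot\nabla\phi_z$. Scheme operator: $\mathfrak F_h^\varepsilon[w_h](z)=\frac\lambda2\Delta_hw_h(z)+\inf_{\alpha\in\mathcal A}\sup_{\beta\in\mathcal B}I_\varepsilon^{\alpha,\beta}[w_h](z)$, $z\in\mathcal N_h$. *)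

theory Defs
  imports "HOL-Analysis.Analysis"
begin

inductive_set partials_closure :: "('a::euclidean_space \<Rightarrow> real) \<Rightarrow> ('a \<Rightarrow> real) set"
  for g :: "'a::euclidean_space \<Rightarrow> real" where
  base: "g \<in> partials_closure g"
| step: "f \<in> partials_closure g \<Longrightarrow> b \<in> Basis \<Longrightarrow>
          (\<lambda>x. frechet_derivative f (at x) b) \<in> partials_closure g"

definition smooth_fun :: "('a::euclidean_space \<Rightarrow> real) \<Rightarrow> bool" where
  "smooth_fun g \<longleftrightarrow> (\<forall>f\<in>partials_closure g. \<forall>x. f differentiable (at x))"

definition kernel_fun :: "(real^'n \<Rightarrow> real) \<Rightarrow> bool" where
  "kernel_fun \<phi> \<longleftrightarrow>
     smooth_fun \<phi> \<and>
     (\<forall>x y. norm x = norm y \<longrightarrow> \<phi> x = \<phi> y) \<and>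
     closure {y. \<phi> y \<noteq> 0} \<subseteq> cball 0 1 \<and>
     (\<forall>y. 0 \<le> \<phi> y) \<and>
     integral UNIV (\<lambda>y. (norm y)^2 * \<phi> y) = real CARD('n)"

definition simplex_verts :: "(real^'n) set \<Rightarrow> bool" where
  "simplex_verts V \<longleftrightarrow> finite V \<and> card V = CARD('n) + 1 \<and> \<not> affine_dependent V"

definition simplicial_mesh :: "(real^'n) set set \<Rightarrow> (real^'n) set \<Rightarrow> bool" where
  "simplicial_mesh T D \<longleftrightarrow> finite T \<and> T \<noteq> {} \<and> (\<forall>V\<in>T. simplex_verts V) \<and>
     \<Union>((\<lambda>V. convex hull V) ` T) = D \<and>
     (\<forall>V\<in>T. \<forall>W\<in>T. convex hull V \<inter> convex hull W = convex hull (V \<inter> W))"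

definition mesh_size :: "(real^'n) set set \<Rightarrow> real" where
  "mesh_size T = Max ((\<lambda>V. diameter (convex hull V)) ` T)"

definition mesh_nodes :: "(real^'n) set set \<Rightarrow> (real^'n) set" where
  "mesh_nodes T = \<Union>T"

definition interior_nodes :: "(real^'n) set set \<Rightarrow> (real^'n) set \<Rightarrow> (real^'n) set" where
  "interior_nodes T \<Omega> = mesh_nodes T \<inter> \<Omega>"

definition outward_normal :: "(real^'n) set \<Rightarrow> real^'n \<Rightarrow> real^'n \<Rightarrow> bool" where
  "outward_normal V i n \<longleftrightarrow> n \<noteq> 0 \<and>
     (\<forall>p\<in>V - {i}. \<forall>q\<in>V - {i}. n \<bullet> (p - q) = 0) \<and>
     (\<forall>q\<in>V - {i}. n \<bullet> (i - q) < 0)"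

definition vec_angle :: "real^'n \<Rightarrow> real^'n \<Rightarrow> real" where
  "vec_angle u v = arccos ((u \<bullet> v) / (norm u * norm v))"

text \<open>Interior dihedral angle between the facets opposite to vertices i and j.\<close>
definition dihedral_angle :: "(real^'n) set \<Rightarrow> real^'n \<Rightarrow> real^'n \<Rightarrow> real" where
  "dihedral_angle V i j =
     pi - vec_angle (SOME n. outward_normal V i n) (SOME n. outward_normal V j n)"

definition weakly_acute :: "(real^'n) set set \<Rightarrow> bool" where
  "weakly_acute T \<longleftrightarrow>
     (\<forall>V\<in>T. \<forall>i\<in>V. \<forall>j\<in>V. i \<noteq> j \<longrightarrow> dihedral_angle V i j \<le> pi / 2)"

definition Omega_eps :: "(real^'n) set \<Rightarrow> real \<Rightarrow> real \<Rightarrow> (real^'n) set" where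
  "Omega_eps \<Omega> lam \<epsilon> = \<Omega> \<union> {x. infdist x (frontier \<Omega>) \<le> sqrt (2 / lam) * \<epsilon>}"

text \<open>Auxiliary conforming mesh of (a polytope containing) Omega_eps that coincides with T on Omega.\<close>
definition aux_mesh :: "(real^'n) set set \<Rightarrow> (real^'n) set set \<Rightarrow> (real^'n) set \<Rightarrow> bool" where
  "aux_mesh T Te De \<longleftrightarrow> finite Te \<and> (\<forall>V\<in>Te. simplex_verts V) \<and> T \<subseteq> Te \<and>
     De \<subseteq> \<Union>((\<lambda>V. convex hull V) ` Te) \<and>
     (\<forall>V\<in>Te. \<forall>W\<in>Te. convex hull V \<inter> convex hull W = convex hull (V \<inter> W))"

text \<open>V_h regarded as continuous piecewise-linear functions on Omega_eps (w.r.t. the auxiliary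
  mesh), extended by zero outside Omega_eps.\<close>
definition Vh :: "(real^'n) set set \<Rightarrow> (real^'n) set \<Rightarrow> (real^'n \<Rightarrow> real) set" where
  "Vh Te De = {f. continuous_on De f \<and>
     (\<forall>V\<in>Te. \<exists>a b. \<forall>x\<in>convex hull V \<inter> De. f x = a \<bullet> x + b) \<and>
     (\<forall>x. x \<notin> De \<longrightarrow> f x = 0)}"

text \<open>Lagrange nodal basis function of V_h^0 at node z (extended by zero outside closure Omega).\<close>
definition hat_fun :: "(real^'n) set set \<Rightarrow> (real^'n) set \<Rightarrow> real^'n \<Rightarrow> (real^'n \<Rightarrow> real)" where
  "hat_fun T \<Omega> z = (SOME f.
     (\<forall>V\<in>T. \<exists>a b. \<forall>x\<in>convex hull V. f x = a \<bullet> x + b) \<and>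
     (\<forall>y\<in>mesh_nodes T. f y = (if y = z then 1 else 0)) \<and>
     (\<forall>x. x \<notin> closure \<Omega> \<longrightarrow> f x = 0))"

definition grad :: "(real^'n \<Rightarrow> real) \<Rightarrow> real^'n \<Rightarrow> real^'n" where
  "grad f x = (\<Sum>b\<in>Basis. frechet_derivative f (at x) b *\<^sub>R b)"

definition disc_lap :: "(real^'n) set set \<Rightarrow> (real^'n) set \<Rightarrow> (real^'n \<Rightarrow> real) \<Rightarrow> real^'n \<Rightarrow> real" where
  "disc_lap T \<Omega> w z =
     - (integral \<Omega> (\<lambda>x. grad w x \<bullet> grad (hat_fun T \<Omega> z) x)) / integral \<Omega> (hat_fun T \<Omega> z)"

definition psd_sqrt :: "real^'n^'n \<Rightarrow> real^'n^'n" where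
  "psd_sqrt X = (THE B. transpose B = B \<and> (\<forall>\<xi>. 0 \<le> \<xi> \<bullet> (B *v \<xi>)) \<and> B ** B = X)"

definition Mmat :: "real \<Rightarrow> real^'n^'n \<Rightarrow> real^'n^'n" where
  "Mmat lam Ax = psd_sqrt (Ax - (lam / 2) *\<^sub>R mat 1)"

definition second_diff :: "(real^'n \<Rightarrow> real) \<Rightarrow> real^'n \<Rightarrow> real^'n \<Rightarrow> real" where
  "second_diff w x y = w (x + y) - 2 * w x + w (x - y)"

definition I_eps :: "(real^'n \<Rightarrow> real) \<Rightarrow> real \<Rightarrow> real \<Rightarrow> real^'n^'n \<Rightarrow> (real^'n \<Rightarrow> real) \<Rightarrow> real^'n \<Rightarrow> real" where
  "I_eps \<phi> lam \<epsilon> Ax w x =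
     (let M = Mmat lam Ax in
      1 / (\<epsilon> ^ (CARD('n) + 2) * det M) *
      integral UNIV (\<lambda>y. second_diff w x y * \<phi> ((1 / \<epsilon>) *\<^sub>R (matrix_inv M *v y))))"

definition scheme_op ::
  "(real^'n) set set \<Rightarrow> (real^'n) set \<Rightarrow> 'a set \<Rightarrow> 'b set \<Rightarrow>
   ('a \<Rightarrow> 'b \<Rightarrow> real^'n \<Rightarrow> real^'n^'n) \<Rightarrow> (real^'n \<Rightarrow> real) \<Rightarrow> real \<Rightarrow> real \<Rightarrow>
   (real^'n \<Rightarrow> real) \<Rightarrow> real^'n \<Rightarrow> real" where
  "scheme_op T \<Omega> As Bs A \<phi> lam \<epsilon> w z =
     lam / 2 * disc_lap T \<Omega> w z +
     Inf ((\<lambda>\<alpha>. Sup ((\<lambda>\<beta>. I_eps \<phi> lam \<epsilon> (A \<alpha> \<beta> z) w z) ` Bs)) ` As)"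

end

theory Submission
  imports Defs
begin

text \<open>Each part of the scheme is monotone at a touching point \<open>z\<close>.

  The nonlocal term integrates second differences against a nonnegative kernel, and touching at
  \<open>z\<close> makes the second differences of \<open>v\<close> at \<open>z\<close> dominated by those of \<open>w\<close>; the normalising
  factor is nonnegative because \<open>det M \<ge> 0\<close> for the positive semidefinite square root \<open>M\<close>.

  For the discrete Laplacian, on every simplex the gradient of the nonnegative affine function
  \<open>w - v\<close> vanishing at \<open>z\<close> is a nonnegative combination of barycentric gradients of vertices other
  than \<open>z\<close>. On a weakly acute simplex distinct barycentric gradients make obtuse angles, so the
  stiffness entry against the hat function of \<open>z\<close> can only decrease; integrating and dividing by
  the nonnegative mass of the hat function gives the inequality. Finally \<open>inf sup\<close> over finite
  index sets preserves the order.\<close>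

definition piecewise_affine :: "(real^'n) set set \<Rightarrow> (real^'n \<Rightarrow> real) \<Rightarrow> bool" where
  "piecewise_affine T f \<longleftrightarrow> (\<forall>V\<in>T. \<exists>a b. \<forall>x\<in>convex hull V. f x = a \<bullet> x + b)"

lemma piecewise_affine_obtain:
  assumes "piecewise_affine T f"
  obtains a b where "\<And>V x. V \<in> T \<Longrightarrow> x \<in> convex hull V \<Longrightarrow> f x = a V \<bullet> x + b V"
proof -
  have "\<forall>V\<in>T. \<exists>ab. \<forall>x\<in>convex hull V. f x = fst ab \<bullet> x + snd ab"
    using assms unfolding piecewise_affine_def by simp
  then obtain ab where "\<forall>V\<in>T. \<forall>x\<in>convex hull V. f x = fst (ab V) \<bullet> x + snd (ab V)"
    by (metis bchoice)
  then show thesis using that[of "\<lambda>V. fst (ab V)" "\<lambda>V. snd (ab V)"] by blast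
qed

lemma simplex_verts_span:
  fixes V :: "(real^'n) set"
  assumes "simplex_verts V" and "y0 \<in> V"
  shows "span ((\<lambda>y. y - y0) ` (V - {y0})) = UNIV"
proof -
  let ?S = "(\<lambda>y. y - y0) ` (V - {y0})"
  have "?S = (\<lambda>y. - y0 + y) ` (V - {y0})" by simp
  then have indep: "independent ?S"
    using assms affine_dependent_iff_dependent2[of y0 V] by (simp add: simplex_verts_def)
  have "card ?S = card (V - {y0})" by (rule card_image) (simp add: inj_on_def)
  also have "\<dots> = CARD('n)" using assms by (simp add: simplex_verts_def)
  finally have "dim ?S = DIM(real^'n)" using dim_eq_card_independent[OF indep] by simp
  then show ?thesis using dim_eq_full by blast
qed

lemma simplex_verts_orthogonal_eq_0:
  fixes V :: "(real^'n) set"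
  assumes V: "simplex_verts V" and y0: "y0 \<in> V" and perp: "\<forall>y\<in>V. a \<bullet> (y - y0) = 0"
  shows "a = 0"
proof -
  have "orthogonal a a"
  proof (rule orthogonal_to_span)
    show "a \<in> span ((\<lambda>y. y - y0) ` (V - {y0}))" using simplex_verts_span[OF V y0] by simp
  qed (use perp in \<open>auto simp: orthogonal_def\<close>)
  then show ?thesis by (simp add: orthogonal_def)
qed

lemma simplex_verts_affine_eq_0:
  fixes V :: "(real^'n) set"
  assumes V: "simplex_verts V" and vanish: "\<forall>y\<in>V. a \<bullet> y + b = 0"
  shows "a = 0"
proof -
  obtain y0 where y0: "y0 \<in> V" using V by (force simp: simplex_verts_def)
  show ?thesis
  proof (rule simplex_verts_orthogonal_eq_0[OF V y0], intro ballI)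
    fix y assume "y \<in> V"
    then have "a \<bullet> y + b = 0" "a \<bullet> y0 + b = 0" using vanish y0 by auto
    then show "a \<bullet> (y - y0) = 0" by (simp add: inner_diff_right)
  qed
qed

lemma simplex_verts_affine_interpolation:
  fixes V :: "(real^'n) set"
  assumes V: "simplex_verts V"
  obtains a b where "\<forall>y\<in>V. a \<bullet> y + b = f y"
proof -
  obtain y0 where y0: "y0 \<in> V" using V by (force simp: simplex_verts_def)
  let ?S = "(\<lambda>y. y - y0) ` (V - {y0})"
  have indep: "independent ?S"
    using V affine_dependent_iff_dependent2[OF y0] by (simp add: simplex_verts_def)
  define g where "g = construct ?S (\<lambda>u. f (u + y0) - f y0)"
  have lin: "linear g" unfolding g_def by (rule linear_construct[OF indep])
  define a where "a = adjoint g 1"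
  have ga: "g x = a \<bullet> x" for x using adjoint_works[OF lin, of x 1] by (simp add: a_def inner_commute)
  have "a \<bullet> y + (f y0 - a \<bullet> y0) = f y" if y: "y \<in> V" for y
  proof (cases "y = y0")
    case False
    then have "y - y0 \<in> ?S" using y by auto
    then have "g (y - y0) = f y - f y0" unfolding g_def by (simp add: construct_basis[OF indep])
    then show ?thesis by (simp add: ga inner_diff_right)
  qed simp
  then show thesis using that by blast
qed

lemma affine_eq_on_convex_hull:
  assumes "\<forall>y\<in>S. a \<bullet> y + b = c \<bullet> y + d" and "x \<in> convex hull S"
  shows "a \<bullet> x + b = c \<bullet> x + d"
proof -
  have "convex hull S \<subseteq> {x. (a - c) \<bullet> x = d - b}"
    by (rule hull_minimal[where S=convex, OF _ convex_hyperplane[of "a - c" "d - b"]]) (use assms(1) in \<open>auto simp: inner_diff_left algebra_simps\<close>)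
  then show ?thesis using assms(2) by (auto simp: inner_diff_left algebra_simps)
qed

lemma affine_nonneg_on_convex_hull:
  assumes "\<forall>y\<in>S. 0 \<le> a \<bullet> y + b" and "x \<in> convex hull S"
  shows "0 \<le> a \<bullet> x + b"
proof -
  have "convex hull S \<subseteq> {x. - b \<le> a \<bullet> x}"
    by (rule hull_minimal[where S=convex, OF _ convex_halfspace_ge[of "- b" a]]) (use assms(1) in auto)
  then show ?thesis using assms(2) by auto
qed

section \<open>Weakly acute simplices\<close>

definition weakly_acute_simplex :: "(real^'n) set \<Rightarrow> bool" where
  "weakly_acute_simplex V \<longleftrightarrow> (\<forall>i\<in>V. \<forall>j\<in>V. i \<noteq> j \<longrightarrow> dihedral_angle V i j \<le> pi / 2)"

lemma weakly_acute_iff: "weakly_acute T \<longleftrightarrow> (\<forall>V\<in>T. weakly_acute_simplex V)"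
  by (simp add: weakly_acute_def weakly_acute_simplex_def)

definition barycentric :: "(real^'n) set \<Rightarrow> real^'n \<Rightarrow> real^'n \<Rightarrow> real \<Rightarrow> bool" where
  "barycentric V y a b \<longleftrightarrow> (\<forall>y'\<in>V. a \<bullet> y' + b = (if y' = y then 1 else 0))"

lemma barycentric_exists:
  fixes V :: "(real^'n) set"
  assumes "simplex_verts V"
  obtains a b where "barycentric V y a b"
  using simplex_verts_affine_interpolation[OF assms, of "\<lambda>y'. if y' = y then 1 else 0"]
  unfolding barycentric_def by metis

lemma barycentric_outward_normal:
  fixes V :: "(real^'n) set"
  assumes V: "simplex_verts V" and y: "y \<in> V" and q0: "q0 \<in> V" "q0 \<noteq> y"
    and bar: "barycentric V y a b"
  shows "outward_normal V y (- a)"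
    and "outward_normal V y n \<Longrightarrow> \<exists>s>0. n = s *\<^sub>R (- a)"
proof -
  have face: "a \<bullet> q + b = 0" if "q \<in> V - {y}" for q
    using bar that by (auto simp: barycentric_def)
  have across: "a \<bullet> (y - q) = 1" if "q \<in> V - {y}" for q
    using face[OF that] bar y by (auto simp: barycentric_def inner_diff_right)
  have along: "a \<bullet> (p - q) = 0" if "p \<in> V - {y}" "q \<in> V - {y}" for p q
    using face[OF that(1)] face[OF that(2)] by (simp add: inner_diff_right)
  have q0': "q0 \<in> V - {y}" using q0 by simp
  show "outward_normal V y (- a)"
    unfolding outward_normal_def
  proof (intro conjI ballI)
    show "- a \<noteq> 0" using across[OF q0'] by auto
  qed (simp_all add: across along)
  assume n: "outward_normal V y n"
  define s where "s = - (n \<bullet> (y - q0))"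
  have "s > 0" using n q0' unfolding outward_normal_def s_def by auto
  have "n + s *\<^sub>R a = 0"
  proof (rule simplex_verts_orthogonal_eq_0[OF V q0(1)], intro ballI)
    fix p assume p: "p \<in> V"
    show "(n + s *\<^sub>R a) \<bullet> (p - q0) = 0"
    proof (cases "p = y")
      case True
      then show ?thesis using across[OF q0'] by (simp add: inner_add_left inner_diff_left s_def)
    next
      case False
      then have "p \<in> V - {y}" using p by simp
      then have "n \<bullet> (p - q0) = 0" "a \<bullet> (p - q0) = 0"
        using n q0' along[of p q0] unfolding outward_normal_def by blast+
      then show ?thesis by (simp add: inner_add_left)
    qed
  qed
  then have "n = s *\<^sub>R (- a)" by (simp add: add_eq_0_iff)
  with \<open>s > 0\<close> show "\<exists>s>0. n = s *\<^sub>R (- a)" by blast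
qed

text \<open>The dihedral angle at the face shared by two facets is the supplement of the angle between
  their outward normals, and these are positive multiples of minus the barycentric gradients.\<close>
lemma barycentric_gradients_inner_nonpos:
  fixes V :: "(real^'n) set"
  assumes V: "simplex_verts V" and acute: "weakly_acute_simplex V"
    and y: "y \<in> V" and z: "z \<in> V" and yz: "y \<noteq> z"
    and bar_y: "barycentric V y ay by" and bar_z: "barycentric V z az bz"
  shows "ay \<bullet> az \<le> 0"
proof -
  define ny where "ny = (SOME n. outward_normal V y n)"
  define nz where "nz = (SOME n. outward_normal V z n)"
  have ny: "outward_normal V y ny"
    unfolding ny_def by (rule someI[where P="outward_normal V y", OF barycentric_outward_normal(1)[OF V y z yz[symmetric] bar_y]])
  have nz: "outward_normal V z nz"
    unfolding nz_def by (rule someI[where P="outward_normal V z", OF barycentric_outward_normal(1)[OF V z y yz bar_z]])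
  obtain sy where sy: "sy > 0" "ny = sy *\<^sub>R (- ay)"
    using barycentric_outward_normal(2)[OF V y z yz[symmetric] bar_y ny] by blast
  obtain sz where sz: "sz > 0" "nz = sz *\<^sub>R (- az)"
    using barycentric_outward_normal(2)[OF V z y yz bar_z nz] by blast
  define r where "r = (ny \<bullet> nz) / (norm ny * norm nz)"
  have den: "norm ny * norm nz > 0" using ny nz unfolding outward_normal_def by simp
  have r: "-1 \<le> r" "r \<le> 1"
    using Cauchy_Schwarz_ineq2[of ny nz] den unfolding r_def
    by (auto simp: divide_le_eq le_divide_eq abs_le_iff)
  have "dihedral_angle V y z \<le> pi / 2"
    using acute y z yz unfolding weakly_acute_simplex_def by blast
  then have "pi / 2 \<le> arccos r"
    unfolding dihedral_angle_def vec_angle_def ny_def[symmetric] nz_def[symmetric] r_def by simp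
  then have "cos (arccos r) \<le> cos (pi / 2)"
    using arccos_lbound[OF r] arccos_ubound[OF r] cos_mono_le_eq[of "arccos r" "pi / 2"] by simp
  then have "r \<le> 0" using cos_arccos[OF r] by simp
  then have "ny \<bullet> nz \<le> 0" using den unfolding r_def by (simp add: divide_le_0_iff)
  then have "sy * sz * (ay \<bullet> az) \<le> 0" using sy sz by (simp add: mult.assoc mult.left_commute)
  then show ?thesis using sy sz by (simp add: mult_le_0_iff)
qed

lemma simplex_affine_gradient_expansion:
  fixes V :: "(real^'n) set"
  assumes V: "simplex_verts V" and bar: "\<And>y. y \<in> V \<Longrightarrow> barycentric V y (a y) (b y)"
  shows "c = (\<Sum>y\<in>V. (c \<bullet> y + d) *\<^sub>R a y)"
proof -
  have "c - (\<Sum>y\<in>V. (c \<bullet> y + d) *\<^sub>R a y) = 0"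
  proof (rule simplex_verts_affine_eq_0[OF V], intro ballI)
    fix y' assume y': "y' \<in> V"
    have "(\<Sum>y\<in>V. (c \<bullet> y + d) * (a y \<bullet> y' + b y)) = (\<Sum>y\<in>V. if y' = y then c \<bullet> y + d else 0)"
      by (rule sum.cong) (use bar y' in \<open>auto simp: barycentric_def\<close>)
    also have "\<dots> = c \<bullet> y' + d" using V y' by (simp add: simplex_verts_def)
    finally show "(c - (\<Sum>y\<in>V. (c \<bullet> y + d) *\<^sub>R a y)) \<bullet> y' + (d - (\<Sum>y\<in>V. (c \<bullet> y + d) * b y)) = 0"
      by (simp add: inner_diff_left inner_sum_left distrib_left sum.distrib algebra_simps)
  qed
  then show ?thesis by simp
qed

lemma weakly_acute_simplex_stiffness_mono:
  fixes V :: "(real^'n) set"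
  assumes V: "simplex_verts V" and acute: "weakly_acute_simplex V"
    and le: "\<forall>y\<in>V. cv \<bullet> y + dv \<le> cw \<bullet> y + dw"
    and eq: "z \<in> V \<Longrightarrow> cv \<bullet> z + dv = cw \<bullet> z + dw"
    and hat: "barycentric V z p q"
  shows "cw \<bullet> p \<le> cv \<bullet> p"
proof (cases "z \<in> V")
  case False
  then have "\<forall>y\<in>V. p \<bullet> y + q = 0" using hat by (auto simp: barycentric_def)
  then have "p = 0" by (rule simplex_verts_affine_eq_0[OF V])
  then show ?thesis by simp
next
  case z: True
  have "\<forall>y\<in>V. \<exists>ab. barycentric V y (fst ab) (snd ab)"
    by (metis barycentric_exists[OF V] fst_conv snd_conv)
  then obtain ab where bar: "\<And>y. y \<in> V \<Longrightarrow> barycentric V y (fst (ab y)) (snd (ab y))"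
    by (metis bchoice)
  define u where "u y = (cw - cv) \<bullet> y + (dw - dv)" for y
  have "\<forall>y\<in>V. (p - fst (ab z)) \<bullet> y + (q - snd (ab z)) = 0"
  proof
    fix y assume "y \<in> V"
    then have "p \<bullet> y + q = fst (ab z) \<bullet> y + snd (ab z)"
      using hat bar[OF z] by (simp add: barycentric_def)
    then show "(p - fst (ab z)) \<bullet> y + (q - snd (ab z)) = 0" by (simp add: inner_diff_left)
  qed
  then have "p - fst (ab z) = 0" by (rule simplex_verts_affine_eq_0[OF V])
  then have p: "p = fst (ab z)" by simp
  have "cw - cv = (\<Sum>y\<in>V. u y *\<^sub>R fst (ab y))"
    unfolding u_def by (rule simplex_affine_gradient_expansion[OF V bar])
  then have "(cw - cv) \<bullet> p = (\<Sum>y\<in>V. u y * (fst (ab y) \<bullet> fst (ab z)))"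
    by (simp add: p inner_sum_left)
  also have "\<dots> \<le> 0"
  proof (rule sum_nonpos)
    fix y assume y: "y \<in> V"
    have "cv \<bullet> y + dv \<le> cw \<bullet> y + dw" using le y by blast
    then have "u y \<ge> 0" by (simp add: u_def inner_diff_left)
    moreover have "u z = 0" using eq z by (simp add: u_def inner_diff_left)
    moreover have "y \<noteq> z \<Longrightarrow> fst (ab y) \<bullet> fst (ab z) \<le> 0"
      using barycentric_gradients_inner_nonpos[OF V acute y z _ bar[OF y] bar[OF z]] by simp
    ultimately show "u y * (fst (ab y) \<bullet> fst (ab z)) \<le> 0"
      by (cases "y = z") (auto simp: mult_nonneg_nonpos)
  qed
  finally show ?thesis by (simp add: inner_diff_left)
qed

section \<open>Monotonicity of the discrete Laplacian\<close>

lemma grad_affine: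
  fixes f :: "real^'n \<Rightarrow> real"
  assumes "open S" "x \<in> S" and f: "\<forall>y\<in>S. f y = a \<bullet> y + b"
  shows "grad f x = a"
proof -
  have "((\<lambda>y. a \<bullet> y + b) has_derivative (\<lambda>h. a \<bullet> h)) (at x)"
    by (auto intro!: derivative_eq_intros)
  then have "(f has_derivative (\<lambda>h. a \<bullet> h)) (at x)"
    by (rule has_derivative_transform_within_open[OF _ assms(1,2)]) (use f in auto)
  then have "frechet_derivative f (at x) = (\<lambda>h. a \<bullet> h)" by (metis frechet_derivative_at)
  then show ?thesis unfolding grad_def by (simp add: euclidean_representation)
qed

text \<open>Conformity makes the affine interpolants on two simplices agree on their common face, so
  they glue to a well-defined function.\<close>
lemma simplicial_mesh_interpolant_exists:
  fixes T :: "(real^'n) set set"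
  assumes mesh: "simplicial_mesh T D"
  shows "\<exists>f. piecewise_affine T f \<and> (\<forall>y\<in>mesh_nodes T. f y = g y) \<and> (\<forall>x. x \<notin> D \<longrightarrow> f x = 0)"
proof -
  have sv: "\<And>V. V \<in> T \<Longrightarrow> simplex_verts V" and cover: "\<Union>((\<lambda>V. convex hull V) ` T) = D"
    and conf: "\<And>V W. V \<in> T \<Longrightarrow> W \<in> T \<Longrightarrow> convex hull V \<inter> convex hull W = convex hull (V \<inter> W)"
    using mesh by (simp_all add: simplicial_mesh_def)
  have "\<exists>ab. \<forall>y\<in>V. fst ab \<bullet> y + snd ab = g y" if V: "V \<in> T" for V
  proof -
    obtain a b where "\<forall>y\<in>V. a \<bullet> y + b = g y"
      using simplex_verts_affine_interpolation[OF sv[OF V], of g] by blast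
    then show ?thesis by (intro exI[of _ "(a, b)"]) simp
  qed
  then obtain ab where ab: "\<And>V y. V \<in> T \<Longrightarrow> y \<in> V \<Longrightarrow> fst (ab V) \<bullet> y + snd (ab V) = g y"
    by (metis bchoice)
  define L where "L V x = fst (ab V) \<bullet> x + snd (ab V)" for V x
  have L_agree: "L V x = L W x"
    if V: "V \<in> T" and W: "W \<in> T" and x: "x \<in> convex hull V" "x \<in> convex hull W" for V W x
  proof -
    have "x \<in> convex hull (V \<inter> W)" using conf[OF V W] x by blast
    moreover have "\<forall>y\<in>V \<inter> W. fst (ab V) \<bullet> y + snd (ab V) = fst (ab W) \<bullet> y + snd (ab W)"
      using ab V W by auto
    ultimately show ?thesis unfolding L_def by (intro affine_eq_on_convex_hull)
  qed
  define f where
    "f x = (if \<exists>V\<in>T. x \<in> convex hull V then L (SOME V. V \<in> T \<and> x \<in> convex hull V) x else 0)" for x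
  have fL: "f x = L V x" if V: "V \<in> T" and x: "x \<in> convex hull V" for V x
  proof -
    have ex: "\<exists>V. V \<in> T \<and> x \<in> convex hull V" using V x by blast
    define W where "W = (SOME V. V \<in> T \<and> x \<in> convex hull V)"
    have W: "W \<in> T" "x \<in> convex hull W" using someI_ex[OF ex] unfolding W_def by blast+
    have "f x = L W x" unfolding f_def W_def using ex by auto
    also have "\<dots> = L V x" using L_agree[OF W(1) V W(2) x] .
    finally show ?thesis .
  qed
  have "piecewise_affine T f"
    unfolding piecewise_affine_def
  proof
    fix V assume "V \<in> T"
    then show "\<exists>a b. \<forall>x\<in>convex hull V. f x = a \<bullet> x + b" using fL unfolding L_def by blast
  qed
  moreover have "f y = g y" if y: "y \<in> mesh_nodes T" for y
  proof -
    obtain V where V: "V \<in> T" "y \<in> V" using y unfolding mesh_nodes_def by blast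
    then have "f y = L V y" using fL[OF V(1) hull_inc[OF V(2)]] by blast
    then show ?thesis using ab[OF V] by (simp add: L_def)
  qed
  moreover have "f x = 0" if x: "x \<notin> D" for x
  proof -
    have "\<not> (\<exists>V\<in>T. x \<in> convex hull V)" using x cover by blast
    then show ?thesis by (simp add: f_def)
  qed
  ultimately show ?thesis by blast
qed

lemma hat_fun_props:
  fixes T :: "(real^'n) set set"
  assumes "simplicial_mesh T (closure \<Omega>)"
  shows "piecewise_affine T (hat_fun T \<Omega> z)"
    and "\<And>y. y \<in> mesh_nodes T \<Longrightarrow> hat_fun T \<Omega> z y = (if y = z then 1 else 0)"
proof -
  have "piecewise_affine T (hat_fun T \<Omega> z) \<and>
      (\<forall>y\<in>mesh_nodes T. hat_fun T \<Omega> z y = (if y = z then 1 else 0)) \<and>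
      (\<forall>x. x \<notin> closure \<Omega> \<longrightarrow> hat_fun T \<Omega> z x = 0)"
    unfolding hat_fun_def piecewise_affine_def[symmetric]
    by (rule someI_ex[OF simplicial_mesh_interpolant_exists[OF assms]])
  then show "piecewise_affine T (hat_fun T \<Omega> z)"
    and "\<And>y. y \<in> mesh_nodes T \<Longrightarrow> hat_fun T \<Omega> z y = (if y = z then 1 else 0)"
    by auto
qed

lemma hat_fun_barycentric:
  fixes T :: "(real^'n) set set"
  assumes mesh: "simplicial_mesh T (closure \<Omega>)" and V: "V \<in> T"
    and slope: "\<forall>x\<in>convex hull V. hat_fun T \<Omega> z x = p \<bullet> x + q"
  shows "barycentric V z p q"
proof -
  have "hat_fun T \<Omega> z y = p \<bullet> y + q" if "y \<in> V" for y using slope hull_inc[OF that] by blast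
  moreover have "hat_fun T \<Omega> z y = (if y = z then 1 else 0)" if "y \<in> V" for y
    using hat_fun_props(2)[OF mesh] V that unfolding mesh_nodes_def by blast
  ultimately show ?thesis unfolding barycentric_def by simp
qed

lemma hat_fun_nonneg:
  fixes T :: "(real^'n) set set"
  assumes mesh: "simplicial_mesh T (closure \<Omega>)" and x: "x \<in> closure \<Omega>"
  shows "0 \<le> hat_fun T \<Omega> z x"
proof -
  have "x \<in> \<Union>((\<lambda>V. convex hull V) ` T)" using mesh x by (simp add: simplicial_mesh_def)
  then obtain V where V: "V \<in> T" "x \<in> convex hull V" by blast
  obtain p q where pq: "\<forall>x\<in>convex hull V. hat_fun T \<Omega> z x = p \<bullet> x + q"
    using hat_fun_props(1)[OF mesh] V(1) unfolding piecewise_affine_def by blast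
  have "\<forall>y\<in>V. 0 \<le> p \<bullet> y + q"
    using hat_fun_barycentric[OF mesh V(1) pq] by (simp add: barycentric_def)
  then have "0 \<le> p \<bullet> x + q" using V(2) by (rule affine_nonneg_on_convex_hull)
  then show ?thesis using pq V(2) by simp
qed

lemma integrable_on_open_piecewise_constant:
  fixes F :: "real^'n \<Rightarrow> real" and S :: "'k \<Rightarrow> (real^'n) set"
  assumes fin: "finite T" and bdd: "bounded (\<Union>K\<in>T. S K)" and open_S: "\<forall>K\<in>T. open (S K)"
    and const: "\<forall>K\<in>T. \<forall>x\<in>S K. F x = c K"
  shows "F integrable_on (\<Union>K\<in>T. S K)"
proof -
  let ?U = "\<Union>K\<in>T. S K"
  have U: "?U \<in> lmeasurable" using bdd open_S by (intro lmeasurable_open) auto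
  have "continuous_on ?U F"
  proof (rule continuous_on_open_UN)
    fix K assume K: "K \<in> T"
    show "open (S K)" using open_S K by blast
    show "continuous_on (S K) F"
      using continuous_on_const[of "S K" "c K"] const K by (simp add: continuous_on_cong)
  qed
  then have meas: "F \<in> borel_measurable (lebesgue_on ?U)"
    using U by (intro continuous_imp_measurable_on_sets_lebesgue fmeasurableD)
  have bound: "\<bar>F x\<bar> \<le> (\<Sum>K\<in>T. \<bar>c K\<bar>)" if x: "x \<in> ?U" for x
  proof -
    obtain K where K: "K \<in> T" "x \<in> S K" using x by blast
    then have "\<bar>F x\<bar> = \<bar>c K\<bar>" using const by simp
    also have "\<dots> \<le> (\<Sum>K\<in>T. \<bar>c K\<bar>)" by (rule member_le_sum[OF K(1) _ fin]) simp
    finally show ?thesis .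
  qed
  show ?thesis
    by (rule measurable_bounded_by_integrable_imp_integrable_real[OF meas integrable_on_const[OF U]
          bound fmeasurableD[OF U]])
qed

lemma simplicial_mesh_interiors:
  fixes T :: "(real^'n) set set"
  assumes \<Omega>: "open \<Omega>" "convex \<Omega>" and mesh: "simplicial_mesh T (closure \<Omega>)"
  shows "(\<Union>K\<in>T. interior (convex hull K)) \<subseteq> \<Omega>"
    and "negligible (\<Omega> - (\<Union>K\<in>T. interior (convex hull K)))"
proof -
  have cover: "\<Union>((\<lambda>K. convex hull K) ` T) = closure \<Omega>" using mesh by (simp add: simplicial_mesh_def)
  have "interior (convex hull K) \<subseteq> \<Omega>" if K: "K \<in> T" for K
  proof -
    have "convex hull K \<subseteq> closure \<Omega>" using cover K by blast
    then have "interior (convex hull K) \<subseteq> interior (closure \<Omega>)" by (rule interior_mono)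
    also have "\<dots> = \<Omega>" using convex_interior_closure[OF \<Omega>(2)] interior_open[OF \<Omega>(1)] by simp
    finally show ?thesis .
  qed
  then show "(\<Union>K\<in>T. interior (convex hull K)) \<subseteq> \<Omega>" by blast
  have "\<Omega> - (\<Union>K\<in>T. interior (convex hull K)) \<subseteq> (\<Union>K\<in>T. frontier (convex hull K))"
  proof
    fix x assume x: "x \<in> \<Omega> - (\<Union>K\<in>T. interior (convex hull K))"
    then have "x \<in> \<Union>((\<lambda>K. convex hull K) ` T)" using cover closure_subset by blast
    then obtain K where K: "K \<in> T" "x \<in> convex hull K" by blast
    have "compact (convex hull K)"
      using mesh K(1) by (simp add: simplicial_mesh_def simplex_verts_def compact_convex_hull
          finite_imp_compact)
    then have "closure (convex hull K) = convex hull K" by (simp add: compact_imp_closed)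
    moreover have "x \<notin> interior (convex hull K)" using x K(1) by blast
    ultimately have "x \<in> frontier (convex hull K)" using K(2) unfolding frontier_def by blast
    then show "x \<in> (\<Union>K\<in>T. frontier (convex hull K))" using K(1) by blast
  qed
  moreover have "negligible (\<Union>K\<in>T. frontier (convex hull K))"
    using mesh by (intro negligible_Union) (auto simp: simplicial_mesh_def negligible_convex_frontier)
  ultimately show "negligible (\<Omega> - (\<Union>K\<in>T. interior (convex hull K)))"
    by (rule negligible_subset[rotated])
qed

lemma integral_le_simplicial_mesh_piecewise_constant:
  fixes F G :: "real^'n \<Rightarrow> real"
  assumes \<Omega>: "open \<Omega>" "convex \<Omega>" "bounded \<Omega>" and mesh: "simplicial_mesh T (closure \<Omega>)"
    and const: "\<And>K x. K \<in> T \<Longrightarrow> x \<in> interior (convex hull K) \<Longrightarrow> F x = cF K \<and> G x = cG K"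
    and le: "\<And>K. K \<in> T \<Longrightarrow> cF K \<le> cG K"
  shows "integral \<Omega> F \<le> integral \<Omega> G"
proof -
  define U where "U = (\<Union>K\<in>T. interior (convex hull K))"
  have "U \<subseteq> \<Omega>" and negl: "negligible (\<Omega> - U)"
    unfolding U_def using simplicial_mesh_interiors[OF \<Omega>(1,2) mesh] by auto
  then have "bounded U" using \<Omega>(3) bounded_subset by blast
  have "finite T" using mesh by (simp add: simplicial_mesh_def)
  have "F integrable_on U" "G integrable_on U"
    using \<open>finite T\<close> \<open>bounded U\<close> const unfolding U_def
    by (auto intro!: integrable_on_open_piecewise_constant)
  then have "integral U F \<le> integral U G"
    by (rule integral_le) (use const le in \<open>auto simp: U_def\<close>)
  moreover have "integral \<Omega> H = integral U H" for H :: "real^'n \<Rightarrow> real"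
    by (rule integral_spike_set) (use negl \<open>U \<subseteq> \<Omega>\<close> in \<open>auto intro: negligible_subset\<close>)
  ultimately show ?thesis by simp
qed

lemma disc_lap_mono:
  fixes \<Omega> :: "(real^'n) set" and v w :: "real^'n \<Rightarrow> real"
  assumes \<Omega>: "open \<Omega>" "convex \<Omega>" "bounded \<Omega>"
    and mesh: "simplicial_mesh T (closure \<Omega>)" and acute: "weakly_acute T"
    and affine: "piecewise_affine T v" "piecewise_affine T w"
    and le: "\<forall>x\<in>closure \<Omega>. v x \<le> w x" and touch: "v z = w z"
  shows "disc_lap T \<Omega> v z \<le> disc_lap T \<Omega> w z"
proof -
  let ?\<phi> = "hat_fun T \<Omega> z"
  obtain av bv where v: "\<And>K x. K \<in> T \<Longrightarrow> x \<in> convex hull K \<Longrightarrow> v x = av K \<bullet> x + bv K"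
    using piecewise_affine_obtain[OF affine(1)] by blast
  obtain aw bw where w: "\<And>K x. K \<in> T \<Longrightarrow> x \<in> convex hull K \<Longrightarrow> w x = aw K \<bullet> x + bw K"
    using piecewise_affine_obtain[OF affine(2)] by blast
  obtain p q where \<phi>: "\<And>K x. K \<in> T \<Longrightarrow> x \<in> convex hull K \<Longrightarrow> ?\<phi> x = p K \<bullet> x + q K"
    using piecewise_affine_obtain[OF hat_fun_props(1)[OF mesh]] by blast
  have grads: "grad v x = av K" "grad w x = aw K" "grad ?\<phi> x = p K"
    if K: "K \<in> T" and x: "x \<in> interior (convex hull K)" for K x
  proof -
    have sub: "interior (convex hull K) \<subseteq> convex hull K" by (rule interior_subset)
    show "grad v x = av K" by (rule grad_affine[OF open_interior x]) (use v[OF K] sub in blast)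
    show "grad w x = aw K" by (rule grad_affine[OF open_interior x]) (use w[OF K] sub in blast)
    show "grad ?\<phi> x = p K" by (rule grad_affine[OF open_interior x]) (use \<phi>[OF K] sub in blast)
  qed
  have "aw K \<bullet> p K \<le> av K \<bullet> p K" if K: "K \<in> T" for K
  proof (rule weakly_acute_simplex_stiffness_mono)
    have hull: "convex hull K \<subseteq> closure \<Omega>" using mesh K by (auto simp: simplicial_mesh_def)
    show "simplex_verts K" using mesh K by (simp add: simplicial_mesh_def)
    show "weakly_acute_simplex K" using acute K by (simp add: weakly_acute_iff)
    show "\<forall>y\<in>K. av K \<bullet> y + bv K \<le> aw K \<bullet> y + bw K"
    proof
      fix y assume "y \<in> K"
      then have y: "y \<in> convex hull K" by (rule hull_inc)
      then have "v y \<le> w y" using le hull by blast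
      then show "av K \<bullet> y + bv K \<le> aw K \<bullet> y + bw K" using v[OF K y] w[OF K y] by simp
    qed
    show "av K \<bullet> z + bv K = aw K \<bullet> z + bw K" if "z \<in> K"
    proof -
      have z: "z \<in> convex hull K" using that by (rule hull_inc)
      show ?thesis using touch v[OF K z] w[OF K z] by simp
    qed
    show "barycentric K z (p K) (q K)"
      using hat_fun_barycentric[OF mesh K] \<phi>[OF K] by blast
  qed
  then have "integral \<Omega> (\<lambda>x. grad w x \<bullet> grad ?\<phi> x) \<le> integral \<Omega> (\<lambda>x. grad v x \<bullet> grad ?\<phi> x)"
    by (intro integral_le_simplicial_mesh_piecewise_constant[OF \<Omega> mesh]) (auto simp: grads)
  moreover have "0 \<le> integral \<Omega> ?\<phi>"
    using hat_fun_nonneg[OF mesh] closure_subset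
    by (cases "?\<phi> integrable_on \<Omega>") (auto intro!: integral_nonneg simp: not_integrable_integral)
  ultimately show ?thesis
    unfolding disc_lap_def by (intro divide_right_mono) auto
qed

section \<open>Positive semidefinite square roots\<close>

definition psd_matrix :: "real^'n^'n \<Rightarrow> bool" where
  "psd_matrix X \<longleftrightarrow> transpose X = X \<and> (\<forall>\<xi>. 0 \<le> \<xi> \<bullet> (X *v \<xi>))"

lemma transpose_diff: "transpose (A - B) = transpose A - transpose (B :: 'a::ab_group_add^'n^'m)"
  by (simp add: transpose_def vec_eq_iff)

lemma symmetric_matrix_inner_commute:
  fixes X :: "real^'n^'n"
  assumes "transpose X = X"
  shows "x \<bullet> (X *v y) = (X *v x) \<bullet> y"
  by (metis assms dot_lmul_matrix vector_transpose_matrix)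

text \<open>Take \<open>t = k s\<close> with \<open>s\<close> so small that \<open>2 + s r > 0\<close>.\<close>
lemma quadratic_nonpos_imp_linear_coeff_eq_0:
  fixes k r :: real
  assumes "\<forall>t. 2 * t * k + t\<^sup>2 * r \<le> 0"
  shows "k = 0"
proof -
  define s where "s = 1 / (\<bar>r\<bar> + 1)"
  have s: "s > 0" "s * \<bar>r\<bar> < 1" unfolding s_def by (auto simp: field_simps)
  have "s * (- \<bar>r\<bar>) \<le> s * r" using s by (intro mult_left_mono) auto
  with s have pos: "s * (2 + s * r) > 0" by simp
  have "k\<^sup>2 * (s * (2 + s * r)) = 2 * (k * s) * k + (k * s)\<^sup>2 * r"
    by (simp add: algebra_simps power2_eq_square)
  also have "\<dots> \<le> 0" using assms by blast
  finally have "k\<^sup>2 * (s * (2 + s * r)) \<le> 0" .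
  then have "\<not> 0 < k\<^sup>2" using pos by (meson mult_pos_pos not_le)
  then show ?thesis by simp
qed

text \<open>First variation of the Rayleigh quotient at a maximiser \<open>e\<close> in the direction \<open>\<eta> \<perp> e\<close>.\<close>
lemma rayleigh_maximiser_orthogonal:
  fixes X :: "real^'n^'n"
  assumes sym: "transpose X = X" and S: "subspace S" and e: "e \<in> S" "e \<bullet> e = 1"
    and max: "\<And>y. y \<in> S \<inter> sphere 0 1 \<Longrightarrow> y \<bullet> (X *v y) \<le> e \<bullet> (X *v e)"
    and \<eta>: "\<eta> \<in> S" "\<eta> \<bullet> e = 0"
  shows "\<eta> \<bullet> (X *v e) = 0"
proof (rule quadratic_nonpos_imp_linear_coeff_eq_0, intro allI)
  fix t :: real
  define m where "m = e \<bullet> (X *v e)"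
  define w where "w = e + t *\<^sub>R \<eta>"
  have ww: "w \<bullet> w = 1 + t\<^sup>2 * (\<eta> \<bullet> \<eta>)"
    unfolding w_def using e \<eta> by (simp add: algebra_simps inner_commute power2_eq_square)
  then have "w \<bullet> w > 0" by (simp add: add_pos_nonneg)
  then have nw: "norm w > 0" by simp
  have "(1 / norm w) *\<^sub>R w \<in> S \<inter> sphere 0 1" using e \<eta> S nw by (simp add: w_def subspace_add subspace_scale)
  then have "((1 / norm w) *\<^sub>R w) \<bullet> (X *v ((1 / norm w) *\<^sub>R w)) \<le> m"
    unfolding m_def by (rule max)
  then have "(1 / (norm w)\<^sup>2) * (w \<bullet> (X *v w)) \<le> m"
    by (simp add: matrix_vector_mult_scaleR power2_eq_square)
  then have "w \<bullet> (X *v w) \<le> m * (w \<bullet> w)"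
    using nw by (simp add: field_simps power2_norm_eq_inner)
  moreover have "w \<bullet> (X *v w) = m + 2 * t * (\<eta> \<bullet> (X *v e)) + t\<^sup>2 * (\<eta> \<bullet> (X *v \<eta>))"
    using symmetric_matrix_inner_commute[OF sym, of e \<eta>] unfolding w_def m_def
    by (simp add: matrix_vector_right_distrib matrix_vector_mult_scaleR algebra_simps
        inner_commute power2_eq_square)
  ultimately show "2 * t * (\<eta> \<bullet> (X *v e)) + t\<^sup>2 * (\<eta> \<bullet> (X *v \<eta>) - m * (\<eta> \<bullet> \<eta>)) \<le> 0"
    using ww by (simp add: algebra_simps)
qed

lemma symmetric_matrix_unit_eigenvector:
  fixes X :: "real^'n^'n"
  assumes sym: "transpose X = X" and S: "subspace S" and inv: "\<forall>x\<in>S. X *v x \<in> S"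
    and nontriv: "S \<noteq> {0}"
  obtains e where "e \<in> S" "norm e = 1" "X *v e = (e \<bullet> (X *v e)) *\<^sub>R e"
proof -
  let ?T = "S \<inter> sphere 0 1"
  let ?q = "\<lambda>x. x \<bullet> (X *v x)"
  obtain x where x: "x \<in> S" "x \<noteq> 0" using nontriv subspace_0[OF S] by blast
  then have "(1 / norm x) *\<^sub>R x \<in> ?T" using S by (simp add: subspace_scale)
  moreover have "compact ?T" using S by (intro closed_Int_compact closed_subspace compact_sphere)
  moreover have "continuous_on ?T ?q"
    by (intro continuous_intros matrix_vector_mult_linear_continuous_on)
  ultimately obtain e where eT: "e \<in> ?T" and emax: "\<And>y. y \<in> ?T \<Longrightarrow> ?q y \<le> ?q e"
    using continuous_attains_sup[of ?T ?q] by blast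
  have eS: "e \<in> S" and ee: "e \<bullet> e = 1" using eT by (auto simp: norm_eq_1)
  define \<eta> where "\<eta> = X *v e - ?q e *\<^sub>R e"
  have \<eta>S: "\<eta> \<in> S" unfolding \<eta>_def using inv eS S by (simp add: subspace_diff subspace_scale)
  have \<eta>e: "\<eta> \<bullet> e = 0"
    unfolding \<eta>_def using ee by (simp add: inner_diff_left inner_diff_right inner_commute)
  have "\<eta> \<bullet> \<eta> = \<eta> \<bullet> (X *v e) - ?q e * (\<eta> \<bullet> e)" unfolding \<eta>_def by (simp add: inner_diff_right)
  also have "\<dots> = 0"
    using rayleigh_maximiser_orthogonal[OF sym S eS ee emax \<eta>S \<eta>e] \<eta>e by simp
  finally have "X *v e = ?q e *\<^sub>R e" unfolding \<eta>_def by simp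
  then show thesis using that eS eT by auto
qed

lemma symmetric_matrix_orthonormal_eigenbasis:
  fixes X :: "real^'n^'n"
  assumes sym: "transpose X = X" and S: "subspace S" and inv: "\<forall>x\<in>S. X *v x \<in> S"
  shows "\<exists>E. finite E \<and> E \<subseteq> S \<and> (\<forall>e\<in>E. norm e = 1 \<and> X *v e = (e \<bullet> (X *v e)) *\<^sub>R e) \<and>
    pairwise orthogonal E \<and> (\<forall>x\<in>S. x = (\<Sum>e\<in>E. (e \<bullet> x) *\<^sub>R e))"
  using S inv
proof (induction "dim S" arbitrary: S rule: less_induct)
  case less
  show ?case
  proof (cases "S = {0}")
    case True
    then show ?thesis by (intro exI[of _ "{}"]) auto
  next
    case False
    obtain e where eS: "e \<in> S" and e1: "norm e = 1" and eig: "X *v e = (e \<bullet> (X *v e)) *\<^sub>R e"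
      using symmetric_matrix_unit_eigenvector[OF sym less.prems False] by blast
    have ee: "e \<bullet> e = 1" using e1 by (simp add: norm_eq_1)
    define S' where "S' = S \<inter> {x. e \<bullet> x = 0}"
    have S': "subspace S'"
      unfolding S'_def using less.prems(1) subspace_hyperplane[of e] by (simp add: subspace_inter)
    have inv': "\<forall>x\<in>S'. X *v x \<in> S'"
    proof
      fix x assume x: "x \<in> S'"
      have "e \<bullet> (X *v x) = (e \<bullet> (X *v e)) * (e \<bullet> x)"
        by (subst symmetric_matrix_inner_commute[OF sym]) (subst eig, simp)
      then show "X *v x \<in> S'" using x less.prems(2) unfolding S'_def by auto
    qed
    have "e \<notin> S'" using ee unfolding S'_def by auto
    then have "S' \<subset> S" using eS unfolding S'_def by blast
    then have "dim S' < dim S"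
      using S' less.prems(1) by (metis dim_psubset span_eq_iff)
    then obtain E where fin: "finite E" and ES': "E \<subseteq> S'"
      and Eeig: "\<forall>e\<in>E. norm e = 1 \<and> X *v e = (e \<bullet> (X *v e)) *\<^sub>R e"
      and Eorth: "pairwise orthogonal E" and Erep: "\<forall>x\<in>S'. x = (\<Sum>e\<in>E. (e \<bullet> x) *\<^sub>R e)"
      using less.hyps[OF _ S' inv'] by blast
    have eE: "e \<notin> E" using ES' ee unfolding S'_def by auto
    have Eperp: "e \<bullet> a = 0" if "a \<in> E" for a using ES' that unfolding S'_def by auto
    show ?thesis
    proof (intro exI[of _ "insert e E"] conjI)
      show "insert e E \<subseteq> S" using ES' eS unfolding S'_def by auto
      show "pairwise orthogonal (insert e E)"
        using Eorth Eperp by (auto simp: pairwise_insert orthogonal_def inner_commute)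
      show "\<forall>x\<in>S. x = (\<Sum>a\<in>insert e E. (a \<bullet> x) *\<^sub>R a)"
      proof
        fix x assume x: "x \<in> S"
        define x' where "x' = x - (e \<bullet> x) *\<^sub>R e"
        have "x' \<in> S'" unfolding S'_def x'_def using x eS ee less.prems(1)
          by (simp add: subspace_diff subspace_scale inner_diff_right)
        moreover have "a \<bullet> x' = a \<bullet> x" if "a \<in> E" for a
          unfolding x'_def using Eperp[OF that] by (simp add: inner_diff_right inner_commute)
        ultimately have "x' = (\<Sum>a\<in>E. (a \<bullet> x) *\<^sub>R a)" using Erep by (metis (no_types, lifting) sum.cong)
        then show "x = (\<Sum>a\<in>insert e E. (a \<bullet> x) *\<^sub>R a)"
          using fin eE unfolding x'_def by (simp add: diff_eq_eq add.commute)
      qed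
    qed (use fin Eeig e1 eig in auto)
  qed
qed

lemma inner_orthonormal_sum:
  assumes fin: "finite E" and e: "e \<in> E" and unit: "\<forall>a\<in>E. norm a = 1"
    and orth: "pairwise orthogonal E"
  shows "e \<bullet> (\<Sum>a\<in>E. c a *\<^sub>R a) = c e"
proof -
  have "e \<bullet> (\<Sum>a\<in>E. c a *\<^sub>R a) = (\<Sum>a\<in>E. if a = e then c a else 0)"
    unfolding inner_sum_right
    by (rule sum.cong) (use e unit orth in \<open>auto simp: norm_eq_1 pairwise_def orthogonal_def\<close>)
  also have "\<dots> = c e" using fin e by simp
  finally show ?thesis .
qed

lemma matrix_vector_mult_sum_outer:
  fixes E :: "(real^'n) set"
  shows "(\<chi> i j. \<Sum>e\<in>E. s e * (e $ i * e $ j)) *v x = (\<Sum>e\<in>E. (s e * (e \<bullet> x)) *\<^sub>R e)"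
proof (rule vec_eq_iff[THEN iffD2], rule allI)
  fix i
  have "((\<chi> i j. \<Sum>e\<in>E. s e * (e $ i * e $ j)) *v x) $ i
      = (\<Sum>j\<in>UNIV. \<Sum>e\<in>E. s e * e $ i * (e $ j * x $ j))"
    unfolding matrix_vector_mult_def by (simp add: sum_distrib_left sum_distrib_right mult_ac)
  also have "\<dots> = (\<Sum>e\<in>E. s e * e $ i * (e \<bullet> x))"
    by (subst sum.swap) (simp add: inner_vec_def sum_distrib_left)
  finally show "((\<chi> i j. \<Sum>e\<in>E. s e * (e $ i * e $ j)) *v x) $ i = (\<Sum>e\<in>E. (s e * (e \<bullet> x)) *\<^sub>R e) $ i"
    by (simp add: sum_component mult_ac)
qed

text \<open>Spectral calculus: take square roots of the eigenvalues.\<close>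
lemma psd_sqrt_exists:
  fixes X :: "real^'n^'n"
  assumes "psd_matrix X"
  shows "\<exists>B. psd_matrix B \<and> B ** B = X"
proof -
  have sym: "transpose X = X" and psd: "\<And>\<xi>. 0 \<le> \<xi> \<bullet> (X *v \<xi>)"
    using assms by (auto simp: psd_matrix_def)
  obtain E where fin: "finite E" and eig: "\<forall>e\<in>E. norm e = 1 \<and> X *v e = (e \<bullet> (X *v e)) *\<^sub>R e"
    and orth: "pairwise orthogonal E" and rep: "\<And>x. x = (\<Sum>e\<in>E. (e \<bullet> x) *\<^sub>R e)"
    using symmetric_matrix_orthonormal_eigenbasis[OF sym subspace_UNIV] by auto
  have unit: "\<forall>e\<in>E. norm e = 1" using eig by blast
  define s where "s e = sqrt (e \<bullet> (X *v e))" for e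
  define B :: "real^'n^'n" where "B = (\<chi> i j. \<Sum>e\<in>E. s e * (e $ i * e $ j))"
  have Bv: "B *v x = (\<Sum>e\<in>E. (s e * (e \<bullet> x)) *\<^sub>R e)" for x
    unfolding B_def by (rule matrix_vector_mult_sum_outer)
  have "psd_matrix B"
    unfolding psd_matrix_def
  proof (intro conjI allI)
    show "transpose B = B" unfolding B_def transpose_def by (simp add: vec_eq_iff mult.commute)
    fix \<xi>
    have "\<xi> \<bullet> (B *v \<xi>) = (\<Sum>e\<in>E. s e * (e \<bullet> \<xi>)\<^sup>2)"
      unfolding Bv by (simp add: inner_sum_right inner_commute power2_eq_square mult_ac)
    also have "\<dots> \<ge> 0" unfolding s_def using psd by (simp add: sum_nonneg)
    finally show "0 \<le> \<xi> \<bullet> (B *v \<xi>)" .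
  qed
  moreover have "B ** B = X"
  proof (rule matrix_eq[THEN iffD2], rule allI)
    fix x
    have "(B ** B) *v x = (\<Sum>e\<in>E. (s e * s e * (e \<bullet> x)) *\<^sub>R e)"
      unfolding matrix_vector_mul_assoc[symmetric] Bv[of "B *v x"]
      by (rule sum.cong) (simp_all add: Bv inner_orthonormal_sum[OF fin _ unit orth])
    also have "\<dots> = (\<Sum>e\<in>E. (e \<bullet> x) *\<^sub>R (X *v e))"
    proof (rule sum.cong)
      fix e assume "e \<in> E"
      then have "X *v e = (e \<bullet> (X *v e)) *\<^sub>R e" using eig by blast
      then have "(e \<bullet> x) *\<^sub>R (X *v e) = (e \<bullet> x) *\<^sub>R ((e \<bullet> (X *v e)) *\<^sub>R e)"
        by (rule arg_cong)
      then show "(s e * s e * (e \<bullet> x)) *\<^sub>R e = (e \<bullet> x) *\<^sub>R (X *v e)"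
        using psd[of e] by (simp add: s_def mult.commute)
    qed simp
    also have "\<dots> = X *v x"
      by (subst (2) rep[of x]) (simp add: vec.sum matrix_vector_mult_scaleR)
    finally show "(B ** B) *v x = X *v x" .
  qed
  ultimately show ?thesis by blast
qed

lemma psd_matrix_mult_eq_0:
  fixes B :: "real^'n^'n"
  assumes B: "psd_matrix B" and null: "\<xi> \<bullet> (B *v \<xi>) = 0"
  shows "B *v \<xi> = 0"
proof -
  define \<eta> where "\<eta> = B *v \<xi>"
  have sym: "transpose B = B" using B by (simp add: psd_matrix_def)
  have "- (\<eta> \<bullet> \<eta>) = 0"
  proof (rule quadratic_nonpos_imp_linear_coeff_eq_0, intro allI)
    fix t :: real
    have "0 \<le> (\<xi> + t *\<^sub>R \<eta>) \<bullet> (B *v (\<xi> + t *\<^sub>R \<eta>))" using B by (simp add: psd_matrix_def)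
    also have "\<dots> = 2 * t * (\<eta> \<bullet> \<eta>) + t\<^sup>2 * (\<eta> \<bullet> (B *v \<eta>))"
      using null symmetric_matrix_inner_commute[OF sym, of \<xi> \<eta>]
      by (simp add: \<eta>_def matrix_vector_right_distrib matrix_vector_mult_scaleR algebra_simps
          inner_commute power2_eq_square)
    finally show "2 * t * - (\<eta> \<bullet> \<eta>) + t\<^sup>2 * - (\<eta> \<bullet> (B *v \<eta>)) \<le> 0" by simp
  qed
  then show ?thesis unfolding \<eta>_def by simp
qed

lemma trace_symmetric_sandwich:
  fixes D C :: "real^'n^'n"
  assumes sym: "transpose D = D"
  shows "trace (D ** (C ** D)) = (\<Sum>i\<in>UNIV. (D *v axis i 1) \<bullet> (C *v (D *v axis i 1)))"
proof -
  have "(D ** (C ** D)) $ i $ i = axis i 1 \<bullet> (D *v (C *v (D *v axis i 1)))" for i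
  proof -
    have "(D ** (C ** D)) $ i $ i = ((D ** (C ** D)) *v axis i 1) $ i"
      by (simp add: matrix_vector_mult_basis column_def)
    then show ?thesis by (simp add: matrix_vector_mul_assoc cart_eq_inner_axis inner_commute)
  qed
  then show ?thesis
    unfolding trace_def by (simp add: symmetric_matrix_inner_commute[OF sym])
qed

text \<open>For \<open>D = B - B'\<close>, \<open>B\<^sup>2 = B'\<^sup>2\<close> gives \<open>tr(D B D) + tr(D B' D) = 0\<close>; both terms are
  nonnegative, so \<open>B\<close> and \<open>B'\<close> vanish on the range of \<open>D\<close>, whence \<open>D\<^sup>2 = 0\<close>.\<close>
lemma psd_sqrt_unique:
  fixes B B' :: "real^'n^'n"
  assumes B: "psd_matrix B" and B': "psd_matrix B'" and sq: "B ** B = B' ** B'"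
  shows "B = B'"
proof -
  define D where "D = B - B'"
  have symD: "transpose D = D" using B B' unfolding D_def psd_matrix_def by (simp add: transpose_diff)
  have "D ** (B ** D) + D ** (D ** B') = 0"
  proof (rule matrix_eq[THEN iffD2], rule allI)
    fix x
    have "(D ** (B ** D) + D ** (D ** B')) *v x = D *v (B *v (D *v x) + D *v (B' *v x))"
      by (simp add: matrix_vector_mult_add_rdistrib matrix_vector_mul_assoc[symmetric]
          matrix_vector_right_distrib)
    also have "B *v (D *v x) + D *v (B' *v x) = B *v (B *v x) - B' *v (B' *v x)"
      by (simp add: D_def matrix_vector_mult_diff_rdistrib matrix_vector_mult_diff_distrib)
    also have "\<dots> = 0" by (simp add: matrix_vector_mul_assoc sq)
    finally show "(D ** (B ** D) + D ** (D ** B')) *v x = 0 *v x" by simp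
  qed
  then have "trace (D ** (B ** D)) + trace (D ** (D ** B')) = 0"
    by (metis trace_add trace_0 mat_0)
  moreover have "trace (D ** (D ** B')) = trace (D ** (B' ** D))"
    by (metis trace_mul_sym matrix_mul_assoc)
  ultimately have "trace (D ** (B ** D)) + trace (D ** (B' ** D)) = 0"
    by simp
  then have "(\<Sum>i\<in>UNIV. (D *v axis i 1) \<bullet> (B *v (D *v axis i 1))) +
      (\<Sum>i\<in>UNIV. (D *v axis i 1) \<bullet> (B' *v (D *v axis i 1))) = 0"
    by (simp add: trace_symmetric_sandwich[OF symD])
  moreover have "0 \<le> (D *v x) \<bullet> (B *v (D *v x))" "0 \<le> (D *v x) \<bullet> (B' *v (D *v x))" for x
    using B B' by (auto simp: psd_matrix_def)
  ultimately have null: "(D *v axis i 1) \<bullet> (B *v (D *v axis i 1)) = 0"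
    "(D *v axis i 1) \<bullet> (B' *v (D *v axis i 1)) = 0" for i
    by (simp_all add: add_nonneg_eq_0_iff sum_nonneg sum_nonneg_eq_0_iff)
  have Dv: "D *v y = B *v y - B' *v y" for y by (simp add: D_def matrix_vector_mult_diff_rdistrib)
  have "D *v (D *v axis i 1) = 0" for i
    unfolding Dv[of "D *v axis i 1"]
    using psd_matrix_mult_eq_0[OF B null(1)] psd_matrix_mult_eq_0[OF B' null(2)] by simp
  then have "D *v axis i 1 = 0" for i
    using symmetric_matrix_inner_commute[OF symD, of "axis i 1" "D *v axis i 1"] by simp
  then show ?thesis
    unfolding D_def by (simp add: vec_eq_iff matrix_vector_mult_basis column_def)
qed

lemma psd_sqrt:
  assumes "psd_matrix X"
  shows "psd_matrix (psd_sqrt X)" "psd_sqrt X ** psd_sqrt X = X"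
proof -
  have "\<exists>!B. psd_matrix B \<and> B ** B = X"
    using psd_sqrt_exists[OF assms] psd_sqrt_unique by blast
  then have "psd_matrix (THE B. psd_matrix B \<and> B ** B = X) \<and> (THE B. psd_matrix B \<and> B ** B = X) ** (THE B. psd_matrix B \<and> B ** B = X) = X"
    by (rule theI')
  then show "psd_matrix (psd_sqrt X)" "psd_sqrt X ** psd_sqrt X = X"
    unfolding psd_sqrt_def psd_matrix_def by (simp_all add: conj_assoc)
qed

lemma det_nonneg_if_psd:
  assumes "psd_matrix (M :: real^'n^'n)"
  shows "0 \<le> det M"
proof -
  obtain N where "N ** N = M" using psd_sqrt_exists[OF assms] by blast
  then have "det M = det N * det N" by (metis det_mul)
  then show ?thesis by simp
qed

lemma det_Mmat_nonneg:
  fixes Ax :: "real^'n^'n"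
  assumes lam: "0 < lam" and sym: "transpose Ax = Ax"
    and ell: "\<forall>\<xi>. lam * (\<xi> \<bullet> \<xi>) \<le> \<xi> \<bullet> (Ax *v \<xi>)"
  shows "0 \<le> det (Mmat lam Ax)"
proof -
  have "\<xi> \<bullet> ((Ax - (lam / 2) *\<^sub>R mat 1) *v \<xi>) = \<xi> \<bullet> (Ax *v \<xi>) - lam / 2 * (\<xi> \<bullet> \<xi>)" for \<xi>
    by (simp add: matrix_vector_mult_diff_rdistrib inner_diff_right
        scaleR_matrix_vector_assoc[symmetric])
  moreover have "lam / 2 * (\<xi> \<bullet> \<xi>) \<le> \<xi> \<bullet> (Ax *v \<xi>)" for \<xi>
  proof -
    have "0 \<le> lam * (\<xi> \<bullet> \<xi>)" "lam * (\<xi> \<bullet> \<xi>) \<le> \<xi> \<bullet> (Ax *v \<xi>)"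
      using lam ell by auto
    then show ?thesis by simp
  qed
  ultimately have "psd_matrix (Ax - (lam / 2) *\<^sub>R mat 1)"
    using sym unfolding psd_matrix_def by (simp add: transpose_diff transpose_scalar)
  then show ?thesis unfolding Mmat_def by (intro det_nonneg_if_psd psd_sqrt)
qed

section \<open>Monotonicity of the nonlocal operator\<close>

lemma kernel_fun_props:
  fixes \<phi> :: "real^'n \<Rightarrow> real"
  assumes "kernel_fun \<phi>"
  shows kernel_fun_continuous: "continuous_on UNIV \<phi>"
    and kernel_fun_nonneg: "0 \<le> \<phi> x"
    and kernel_fun_eq_0: "1 < norm x \<Longrightarrow> \<phi> x = 0"
proof -
  have "smooth_fun \<phi>" using assms unfolding kernel_fun_def by blast
  then have "\<forall>x. \<phi> differentiable (at x)"
    using partials_closure.base[of \<phi>] unfolding smooth_fun_def by blast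
  then have "\<forall>x\<in>UNIV. isCont \<phi> x" using differentiable_imp_continuous_within by blast
  then show "continuous_on UNIV \<phi>" by (rule continuous_at_imp_continuous_on)
  show "0 \<le> \<phi> x" using assms unfolding kernel_fun_def by blast
  have "closure {y. \<phi> y \<noteq> 0} \<subseteq> cball 0 1" using assms unfolding kernel_fun_def by blast
  then have supp: "{y. \<phi> y \<noteq> 0} \<subseteq> cball 0 1" by (rule subset_trans[OF closure_subset])
  assume "1 < norm x"
  then have "x \<notin> cball 0 1" by simp
  with supp show "\<phi> x = 0" by blast
qed

lemma kernel_fun_bounded:
  fixes \<phi> :: "real^'n \<Rightarrow> real"
  assumes "kernel_fun \<phi>"
  shows "bounded (range \<phi>)"
proof -
  have "compact (\<phi> ` cball 0 1)"
    by (rule compact_continuous_image[OF continuous_on_subset[OF kernel_fun_continuous[OF assms]]])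
      simp_all
  then have "bounded (insert 0 (\<phi> ` cball 0 1))" by (simp add: compact_imp_bounded)
  moreover have "range \<phi> \<subseteq> insert 0 (\<phi> ` cball 0 1)"
  proof
    fix u assume "u \<in> range \<phi>"
    then obtain x where u: "u = \<phi> x" by blast
    show "u \<in> insert 0 (\<phi> ` cball 0 1)"
    proof (cases "norm x \<le> 1")
      case False
      then show ?thesis using kernel_fun_eq_0[OF assms, of x] u by simp
    qed (use u in simp)
  qed
  ultimately show ?thesis by (rule bounded_subset)
qed

lemma kernel_fun_rescaled:
  fixes \<phi> :: "real^'n \<Rightarrow> real" and M :: "real^'n^'n"
  assumes kern: "kernel_fun \<phi>" and \<epsilon>: "0 < \<epsilon>" and M: "det M \<noteq> 0"
  defines "g \<equiv> \<lambda>y. \<phi> ((1 / \<epsilon>) *\<^sub>R (matrix_inv M *v y))"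
  obtains R where "g \<in> borel_measurable borel" "bounded (range g)"
    "\<And>y. y \<notin> cball 0 R \<Longrightarrow> g y = 0"
proof -
  have "continuous_on UNIV (\<lambda>y. (1 / \<epsilon>) *\<^sub>R (matrix_inv M *v y))"
    by (intro continuous_intros matrix_vector_mult_linear_continuous_on)
  then have "continuous_on UNIV g"
    unfolding g_def by (rule continuous_on_compose2[OF kernel_fun_continuous[OF kern]]) simp
  then have meas: "g \<in> borel_measurable borel" by (rule borel_measurable_continuous_onI)
  have bdd: "bounded (range g)"
    by (rule bounded_subset[OF kernel_fun_bounded[OF kern]]) (auto simp: g_def)
  obtain C where C: "C > 0" "\<And>x. norm (M *v x) \<le> norm x * C"
    using bounded_linear.pos_bounded[OF matrix_vector_mul_bounded_linear[of M]] by blast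
  have "M ** matrix_inv M = mat 1"
    unfolding matrix_inv_def
    by (rule conjunct1[OF someI_ex]) (use M in \<open>simp add: invertible_det_nz[symmetric] invertible_def\<close>)
  then have inv: "M *v (matrix_inv M *v y) = y" for y by (simp add: matrix_vector_mul_assoc)
  have "g y = 0" if y: "y \<notin> cball 0 (\<epsilon> * C)" for y
  proof -
    have "\<epsilon> * C < norm (M *v (matrix_inv M *v y))" using y by (simp add: inv)
    also have "\<dots> \<le> norm (matrix_inv M *v y) * C" by (rule C(2))
    finally have "\<epsilon> < norm (matrix_inv M *v y)" using C(1) by simp
    then have "1 < norm ((1 / \<epsilon>) *\<^sub>R (matrix_inv M *v y))" using \<epsilon> by (simp add: field_simps)
    then show "g y = 0" unfolding g_def by (rule kernel_fun_eq_0[OF kern])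
  qed
  then show thesis using that[OF meas bdd] by blast
qed

lemma zero_extension_measurable:
  fixes f :: "real^'n \<Rightarrow> real"
  assumes "closed D" "continuous_on D f" "\<forall>x. x \<notin> D \<longrightarrow> f x = 0"
  shows "f \<in> borel_measurable borel"
proof -
  have "(\<lambda>x. indicat_real D x *\<^sub>R f x) \<in> borel_measurable borel"
    by (rule borel_measurable_continuous_on_indicator[OF borel_closed[OF assms(1)] assms(2)])
  moreover have "(\<lambda>x. indicat_real D x *\<^sub>R f x) = f" using assms(3) by (auto simp: indicator_def fun_eq_iff)
  ultimately show ?thesis by simp
qed

lemma zero_extension_bounded:
  fixes f :: "real^'n \<Rightarrow> real"
  assumes "closed D" "continuous_on D f" "\<forall>x. x \<notin> D \<longrightarrow> f x = 0" "compact C"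
  shows "bounded (f ` C)"
proof -
  have "compact (f ` (D \<inter> C))"
    by (rule compact_continuous_image[OF continuous_on_subset[OF assms(2)] closed_Int_compact[OF assms(1,4)]])
      simp
  then have "bounded (insert 0 (f ` (D \<inter> C)))" by (simp add: compact_imp_bounded)
  moreover have "f ` C \<subseteq> insert 0 (f ` (D \<inter> C))" using assms(3) by auto
  ultimately show ?thesis by (rule bounded_subset)
qed

lemma second_diff_mult_integrable:
  fixes f g :: "real^'n \<Rightarrow> real"
  assumes f: "f \<in> borel_measurable borel" "bounded (f ` cball z R)"
    and g: "g \<in> borel_measurable borel" "bounded (range g)" "\<And>y. y \<notin> cball 0 R \<Longrightarrow> g y = 0"
  shows "(\<lambda>y. second_diff f z y * g y) integrable_on UNIV"
proof -
  obtain Kf where Kf: "\<forall>x\<in>cball z R. \<bar>f x\<bar> \<le> Kf" using f(2) by (auto simp: bounded_iff)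
  obtain Kg where Kg: "\<forall>y. \<bar>g y\<bar> \<le> Kg" using g(2) by (auto simp: bounded_iff)
  have shifts: "(\<lambda>y. z + y) \<in> borel_measurable borel" "(\<lambda>y. z - y) \<in> borel_measurable borel"
    by (intro borel_measurable_continuous_onI continuous_intros)+
  have "(\<lambda>y. f (z + y)) \<in> borel_measurable borel" "(\<lambda>y. f (z - y)) \<in> borel_measurable borel"
    using measurable_compose[OF shifts(1) f(1)] measurable_compose[OF shifts(2) f(1)]
    by (simp_all add: o_def)
  then have "(\<lambda>y. second_diff f z y * g y) \<in> borel_measurable borel"
    unfolding second_diff_def using g(1) by measurable
  then have "(\<lambda>y. second_diff f z y * g y) \<in> borel_measurable lebesgue"
    by (intro measurable_completion) simp
  then have meas: "(\<lambda>y. second_diff f z y * g y) \<in> borel_measurable (lebesgue_on UNIV)"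
    by (simp add: lebesgue_on_UNIV_eq)
  define b where "b y = (if y \<in> cball 0 R then 4 * Kf * Kg else 0)" for y :: "real^'n"
  have "b integrable_on UNIV"
    unfolding b_def integrable_restrict_UNIV by (rule integrable_on_const[OF lmeasurable_cball])
  moreover have "\<bar>second_diff f z y * g y\<bar> \<le> b y" for y
  proof (cases "y \<in> cball 0 R")
    case True
    then have "z + y \<in> cball z R" "z - y \<in> cball z R" "z \<in> cball z R"
      by (auto simp: dist_norm norm_minus_commute intro: order_trans[OF norm_ge_zero])
    then have "\<bar>f (z + y)\<bar> \<le> Kf" "\<bar>f (z - y)\<bar> \<le> Kf" "\<bar>f z\<bar> \<le> Kf" using Kf by auto
    then have "\<bar>second_diff f z y\<bar> \<le> 4 * Kf" unfolding second_diff_def by linarith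
    then have "\<bar>second_diff f z y\<bar> * \<bar>g y\<bar> \<le> 4 * Kf * Kg"
      using Kg by (intro mult_mono) auto
    then show ?thesis using True by (simp add: abs_mult b_def)
  qed (simp add: g(3) b_def)
  ultimately show ?thesis
    by (intro measurable_bounded_by_integrable_imp_integrable_real[OF meas]) simp_all
qed

lemma I_eps_mono:
  fixes Ax :: "real^'n^'n" and \<phi> v w :: "real^'n \<Rightarrow> real"
  assumes lam: "0 < lam" and \<epsilon>: "0 < \<epsilon>"
    and sym: "transpose Ax = Ax" and ell: "\<forall>\<xi>. lam * (\<xi> \<bullet> \<xi>) \<le> \<xi> \<bullet> (Ax *v \<xi>)"
    and kern: "kernel_fun \<phi>"
    and meas: "v \<in> borel_measurable borel" "w \<in> borel_measurable borel"
    and bdd: "\<And>C. compact C \<Longrightarrow> bounded (v ` C)" "\<And>C. compact C \<Longrightarrow> bounded (w ` C)"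
    and le: "\<And>x. v x \<le> w x" and touch: "v z = w z"
  shows "I_eps \<phi> lam \<epsilon> Ax v z \<le> I_eps \<phi> lam \<epsilon> Ax w z"
proof -
  define M where "M = Mmat lam Ax"
  define c where "c = 1 / (\<epsilon> ^ (CARD('n) + 2) * det M)"
  define g where "g y = \<phi> ((1 / \<epsilon>) *\<^sub>R (matrix_inv M *v y))" for y
  have I_eps: "I_eps \<phi> lam \<epsilon> Ax f z = c * integral UNIV (\<lambda>y. second_diff f z y * g y)" for f
    unfolding I_eps_def Let_def M_def[symmetric] c_def g_def by simp
  have "0 \<le> c" using det_Mmat_nonneg[OF lam sym ell] \<epsilon> by (simp add: c_def M_def)
  show ?thesis
  proof (cases "det M = 0")
    case False
    obtain R where g: "g \<in> borel_measurable borel" "bounded (range g)"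
      "\<And>y. y \<notin> cball 0 R \<Longrightarrow> g y = 0"
      using kernel_fun_rescaled[OF kern \<epsilon> False] unfolding g_def by blast
    have "second_diff v z y * g y \<le> second_diff w z y * g y" for y
    proof -
      have "second_diff v z y \<le> second_diff w z y"
        using le[of "z + y"] le[of "z - y"] touch by (simp add: second_diff_def)
      then show ?thesis using kernel_fun_nonneg[OF kern] by (simp add: g_def mult_right_mono)
    qed
    then have "integral UNIV (\<lambda>y. second_diff v z y * g y) \<le> integral UNIV (\<lambda>y. second_diff w z y * g y)"
      by (intro integral_le second_diff_mult_integrable[OF meas(1) bdd(1)[OF compact_cball] g]
          second_diff_mult_integrable[OF meas(2) bdd(2)[OF compact_cball] g])
    then show ?thesis unfolding I_eps using \<open>0 \<le> c\<close> by (rule mult_left_mono)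
  qed (simp add: I_eps c_def)
qed

lemma INF_SUP_mono_finite:
  fixes f g :: "'a \<Rightarrow> 'b \<Rightarrow> real"
  assumes A: "finite A" "A \<noteq> {}" and B: "finite B" "B \<noteq> {}"
    and le: "\<And>a b. a \<in> A \<Longrightarrow> b \<in> B \<Longrightarrow> f a b \<le> g a b"
  shows "(INF a\<in>A. SUP b\<in>B. f a b) \<le> (INF a\<in>A. SUP b\<in>B. g a b)"
proof (rule cINF_mono)
  show "bdd_below ((\<lambda>a. SUP b\<in>B. f a b) ` A)" using A(1) by (intro bdd_below_finite) simp
  fix a assume a: "a \<in> A"
  have "(SUP b\<in>B. f a b) \<le> (SUP b\<in>B. g a b)"
  proof (rule cSUP_mono)
    show "bdd_above (g a ` B)" using B(1) by (intro bdd_above_finite) simp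
    show "\<exists>m\<in>B. f a n \<le> g a m" if "n \<in> B" for n using le[OF a that] that by blast
  qed (use B in simp)
  then show "\<exists>n\<in>A. (SUP b\<in>B. f n b) \<le> (SUP b\<in>B. g a b)" using a by blast
qed (use A in simp)

lemma Omega_eps_props:
  assumes "open \<Omega>" "0 < lam" "0 \<le> \<epsilon>"
  shows closure_subset_Omega_eps: "closure \<Omega> \<subseteq> Omega_eps \<Omega> lam \<epsilon>"
    and closed_Omega_eps: "closed (Omega_eps \<Omega> lam \<epsilon>)"
proof -
  define C where "C = {x. infdist x (frontier \<Omega>) \<le> sqrt (2 / lam) * \<epsilon>}"
  have eps: "Omega_eps \<Omega> lam \<epsilon> = \<Omega> \<union> C" by (simp add: Omega_eps_def C_def)
  have "closure \<Omega> - \<Omega> \<subseteq> C"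
  proof
    fix x assume "x \<in> closure \<Omega> - \<Omega>"
    then have "x \<in> frontier \<Omega>" using interior_open[OF assms(1)] by (simp add: frontier_def)
    then show "x \<in> C" using assms(2,3) by (simp add: C_def infdist_zero)
  qed
  then show "closure \<Omega> \<subseteq> Omega_eps \<Omega> lam \<epsilon>" unfolding eps by blast
  then have "Omega_eps \<Omega> lam \<epsilon> = closure \<Omega> \<union> C" unfolding eps using closure_subset by blast
  moreover have "closed C" unfolding C_def
    by (intro closed_Collect_le continuous_on_infdist continuous_on_id continuous_on_const)
  ultimately show "closed (Omega_eps \<Omega> lam \<epsilon>)" by (simp add: closed_Un)
qed

lemma Vh_props:
  assumes "closed D" "f \<in> Vh T D"
  shows Vh_measurable: "f \<in> borel_measurable borel"
    and Vh_bounded: "compact C \<Longrightarrow> bounded (f ` C)"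
  using assms zero_extension_measurable zero_extension_bounded by (auto simp: Vh_def)

lemma Vh_piecewise_affine:
  assumes "Th \<subseteq> Te" "\<forall>V\<in>Th. convex hull V \<subseteq> D" "f \<in> Vh Te D"
  shows "piecewise_affine Th f"
  unfolding piecewise_affine_def
proof
  fix V assume V: "V \<in> Th"
  then have "V \<in> Te" using assms(1) by blast
  then obtain a b where "\<forall>x\<in>convex hull V \<inter> D. f x = a \<bullet> x + b"
    using assms(3) unfolding Vh_def by blast
  then show "\<exists>a b. \<forall>x\<in>convex hull V. f x = a \<bullet> x + b" using assms(2) V by blast
qed

theorem lemma3p2:
  fixes \<Omega> :: "(real^'n) set"
    and Th Te :: "(real^'n) set set"
    and As :: "'a set" and Bs :: "'b set"
    and A :: "'a \<Rightarrow> 'b \<Rightarrow> real^'n \<Rightarrow> real^'n^'n"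
    and \<phi> :: "real^'n \<Rightarrow> real"
    and lam Lam h \<epsilon> :: real
    and v w :: "real^'n \<Rightarrow> real"
    and z :: "real^'n"
  assumes dim: "CARD('n) \<ge> 2"
    and dom: "open \<Omega>" "bounded \<Omega>" "convex \<Omega>"
    and AB: "finite As" "As \<noteq> {}" "finite Bs" "Bs \<noteq> {}"
    and ell: "0 < lam" "lam \<le> Lam"
    and coeff: "\<forall>\<alpha>\<in>As. \<forall>\<beta>\<in>Bs. (\<exists>C. lipschitz_on C (closure \<Omega>) (A \<alpha> \<beta>)) \<and>
                 (\<forall>x\<in>closure \<Omega>. transpose (A \<alpha> \<beta> x) = A \<alpha> \<beta> x \<and>
                    (\<forall>\<xi>. lam * (\<xi> \<bullet> \<xi>) \<le> \<xi> \<bullet> (A \<alpha> \<beta> x *v \<xi>) \<and>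
                         \<xi> \<bullet> (A \<alpha> \<beta> x *v \<xi>) \<le> Lam * (\<xi> \<bullet> \<xi>)))"
    and kern: "kernel_fun \<phi>"
    and mesh: "simplicial_mesh Th (closure \<Omega>)" "mesh_size Th = h" "0 < h"
    and acute: "weakly_acute Th"
    and eps: "0 < \<epsilon>"
    and aux: "aux_mesh Th Te (Omega_eps \<Omega> lam \<epsilon>)"
    and vw: "v \<in> Vh Te (Omega_eps \<Omega> lam \<epsilon>)" "w \<in> Vh Te (Omega_eps \<Omega> lam \<epsilon>)"
    and le: "\<forall>x\<in>Omega_eps \<Omega> lam \<epsilon>. v x \<le> w x"
    and node: "z \<in> interior_nodes Th \<Omega>" "v z = w z"
  shows "scheme_op Th \<Omega> As Bs A \<phi> lam \<epsilon> v z \<le> scheme_op Th \<Omega> As Bs A \<phi> lam \<epsilon> w z"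
proof -
  let ?D = "Omega_eps \<Omega> lam \<epsilon>"
  have D: "closure \<Omega> \<subseteq> ?D" "closed ?D"
    using closure_subset_Omega_eps[OF dom(1) ell(1)] closed_Omega_eps[OF dom(1) ell(1)] eps by simp_all
  have le_everywhere: "v x \<le> w x" for x using le vw by (cases "x \<in> ?D") (auto simp: Vh_def)
  have hulls: "\<forall>V\<in>Th. convex hull V \<subseteq> ?D" using mesh(1) D(1) by (auto simp: simplicial_mesh_def)
  have "Th \<subseteq> Te" using aux by (simp add: aux_mesh_def)
  then have "disc_lap Th \<Omega> v z \<le> disc_lap Th \<Omega> w z"
    using D(1) le node(2) Vh_piecewise_affine[OF _ hulls] vw
    by (intro disc_lap_mono[OF dom(1,3,2) mesh(1) acute]) auto
  moreover have "I_eps \<phi> lam \<epsilon> (A \<alpha> \<beta> z) v z \<le> I_eps \<phi> lam \<epsilon> (A \<alpha> \<beta> z) w z"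
    if "\<alpha> \<in> As" "\<beta> \<in> Bs" for \<alpha> \<beta>
  proof (rule I_eps_mono[OF ell(1) eps _ _ kern Vh_measurable[OF D(2) vw(1)]
        Vh_measurable[OF D(2) vw(2)] Vh_bounded[OF D(2) vw(1)] Vh_bounded[OF D(2) vw(2)]
        le_everywhere node(2)])
    have "z \<in> closure \<Omega>" using node(1) closure_subset by (auto simp: interior_nodes_def)
    then show "transpose (A \<alpha> \<beta> z) = A \<alpha> \<beta> z" "\<forall>\<xi>. lam * (\<xi> \<bullet> \<xi>) \<le> \<xi> \<bullet> (A \<alpha> \<beta> z *v \<xi>)"
      using coeff that by blast+
  qed
  then have "(INF \<alpha>\<in>As. SUP \<beta>\<in>Bs. I_eps \<phi> lam \<epsilon> (A \<alpha> \<beta> z) v z)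
      \<le> (INF \<alpha>\<in>As. SUP \<beta>\<in>Bs. I_eps \<phi> lam \<epsilon> (A \<alpha> \<beta> z) w z)"
    by (rule INF_SUP_mono_finite[OF AB])
  ultimately show ?thesis
    unfolding scheme_op_def using ell(1) by (intro add_mono mult_left_mono) auto
qed

end
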